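(* Assume the standing hypotheses (H). Let $t$ be an integer with $t\ge k_3/3$. Let $A$ be a part of $G$ with $|A|=4$, let $\{u,v\}\subseteq A$ be a good pair for $A$, and let $\{y,z\}=A\setminus\{u,v\}$. Then \[\bigl|(L(u)\cap L(v))\cup L(y)\cup L(z)\bigr|\ \ge\ n-t-k_4 .\]
   Context: A list assignment $L$ assigns to each vertex $v$ a set $L(v)$ of colors; an $L$-coloring is a proper coloring $f$ with $f(v)\in L(v)$ for all $v$; $\mathrm{ch}$ denotes choice number and $\chi$ chromatic number. A part of a complete multipartite graph is one of its maximal stable sets. Standing hypotheses (H): $k\ge1$ and $n\ge 2k+2$ are integers; $G$ is a complete $k$-partite graph (exactly $k$ nonempty parts) on $n$ vertices; $L$ is a list assignment for $G$ with $|L(v)|\ge\lceil (n+k-1)/3\rceil$ for every vertex $v$; $G$ has no $L$-coloring; $\left|\bigcup_{v\in V(G)}L(v)\right|\le n-1$; and every graph $H$ with fewer than $n$ vertices satisfies $\mathrm{ch}(H)\le\max\{\chi(H),\lceil(|V(H)|+\chi(H)-1)/3\rceil\}$. For $i\in\{1,2,3,4\}$, $k_i$ denotes the number of parts of $G$ of size $i$. For a part $A$ with $|A|\ge3$, a pair $\{u,v\}\subseteq A$ of distinct vertices is a good pair for $A$ if either $|A|=3$ and $|L(u)\cap L(v)|\ge\frac{k_1+k_4+1}{3}$, or $|A|=4$ and $|L(u)\cap L(v)|\ge|L(w)\cap L(z)|$ where $\{w,z\}=A\setminus\{u,v\}$. *)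

theory Defs
  imports Complex_Main
begin

definition simple_graph :: "'a set \<Rightarrow> ('a \<Rightarrow> 'a \<Rightarrow> bool) \<Rightarrow> bool" where
  "simple_graph V E \<longleftrightarrow> finite V \<and> (\<forall>u\<in>V. \<forall>v\<in>V. E u v \<longrightarrow> E v u) \<and> (\<forall>v\<in>V. \<not> E v v)"

definition proper_coloring :: "'a set \<Rightarrow> ('a \<Rightarrow> 'a \<Rightarrow> bool) \<Rightarrow> ('a \<Rightarrow> 'c) \<Rightarrow> bool" where
  "proper_coloring V E f \<longleftrightarrow> (\<forall>u\<in>V. \<forall>v\<in>V. E u v \<longrightarrow> f u \<noteq> f v)"

definition L_coloring :: "'a set \<Rightarrow> ('a \<Rightarrow> 'a \<Rightarrow> bool) \<Rightarrow> ('a \<Rightarrow> 'c set) \<Rightarrow> ('a \<Rightarrow> 'c) \<Rightarrow> bool" where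
  "L_coloring V E L f \<longleftrightarrow> proper_coloring V E f \<and> (\<forall>v\<in>V. f v \<in> L v)"

definition chromatic_number :: "'a set \<Rightarrow> ('a \<Rightarrow> 'a \<Rightarrow> bool) \<Rightarrow> nat" where
  "chromatic_number V E = (LEAST m. \<exists>f :: 'a \<Rightarrow> nat. proper_coloring V E f \<and> (\<forall>v\<in>V. f v < m))"

definition choice_number :: "'a set \<Rightarrow> ('a \<Rightarrow> 'a \<Rightarrow> bool) \<Rightarrow> nat" where
  "choice_number V E = (LEAST m. \<forall>L :: 'a \<Rightarrow> nat set.
      (\<forall>v\<in>V. finite (L v) \<and> card (L v) \<ge> m) \<longrightarrow> (\<exists>f. L_coloring V E L f))"

definition is_partition :: "'a set \<Rightarrow> 'a set set \<Rightarrow> bool" where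
  "is_partition V P \<longleftrightarrow> \<Union>P = V \<and> {} \<notin> P \<and>
     (\<forall>A\<in>P. \<forall>B\<in>P. A \<noteq> B \<longrightarrow> A \<inter> B = {})"

definition cmp_adj :: "'a set set \<Rightarrow> 'a \<Rightarrow> 'a \<Rightarrow> bool" where
  "cmp_adj P u v \<longleftrightarrow> u \<in> \<Union>P \<and> v \<in> \<Union>P \<and> \<not> (\<exists>A\<in>P. u \<in> A \<and> v \<in> A)"

definition kpart :: "'a set set \<Rightarrow> nat \<Rightarrow> nat" where
  "kpart P i = card {A\<in>P. card A = i}"

text \<open>The induction hypothesis on graph size: every graph H with fewer than n vertices has
  ch(H) \<le> max(chi(H), ceil((|V(H)|+chi(H)-1)/3)). Graphs are taken on vertex type nat
  (every finite graph is isomorphic to one of these).\<close>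
definition small_graphs_ok :: "nat \<Rightarrow> bool" where
  "small_graphs_ok n \<longleftrightarrow> (\<forall>(V :: nat set) E. simple_graph V E \<and> card V < n \<longrightarrow>
      choice_number V E \<le> max (chromatic_number V E)
         (nat \<lceil>(real (card V) + real (chromatic_number V E) - 1) / 3\<rceil>))"

end

theory Submission
  imports Defs
begin

text \<open>
  Let s = \<lceil>(n+k-1)/3\<rceil> be the guaranteed list size.
  (1) No colour lies in the lists of three vertices of one part: otherwise give these three
      (pairwise non-adjacent) vertices that colour and list-colour the remaining n-3 vertices
      by minimality, which needs lists of size \<lceil>(n-3+k-1)/3\<rceil> = s-1 only.
  (2) Hence by double counting the list sizes in a part sum to at most 2|\<Union>L| \<le> 2(n-1).
      Summing over all parts forces every part to have at most 4 vertices, so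
      n \<le> 2k + k_3 + 3k_4.
  (3) For a part {u,v,y,z}, (1) makes L(u)\<inter>L(v) disjoint from L(y)\<union>L(z), and the good-pair
      condition gives |(L u \<inter> L v) \<union> L y \<union> L z| \<ge> |L y \<inter> L z| + |L y \<union> L z| \<ge> 2s.
  (4) Since 3s \<ge> n+k-1 and 3t \<ge> k_3, the bound n \<le> 2k + k_3 + 3k_4 turns 2s into n-t-k_4.
\<close>

section \<open>General facts on list colourings\<close>

lemma injective_choice_from_lists:
  assumes "finite V" and "\<forall>v\<in>V. finite (L v) \<and> card (L v) \<ge> card V"
  shows "\<exists>f. inj_on f V \<and> (\<forall>v\<in>V. f v \<in> L v)"
  using assms
proof (induction V rule: finite_induct)
  case empty
  then show ?case by auto
next
  case (insert x F)
  then have "\<forall>v\<in>F. finite (L v) \<and> card (L v) \<ge> card F" by auto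
  with insert.IH obtain f where f: "inj_on f F" "\<forall>v\<in>F. f v \<in> L v" by blast
  have "card (f ` F) \<le> card F" by (rule card_image_le) (use insert in auto)
  also have "\<dots> < card (L x)" using insert.prems insert.hyps by auto
  finally have "card (f ` F) < card (L x)" .
  then have "\<not> L x \<subseteq> f ` F"
    using card_mono[of "f ` F" "L x"] insert.hyps(1) by auto
  then obtain c where c: "c \<in> L x" "c \<notin> f ` F" by blast
  have "inj_on (f(x := c)) (insert x F)" using f(1) c(2) insert.hyps(2)
    by (auto simp: inj_on_def)
  moreover have "\<forall>v\<in>insert x F. (f(x := c)) v \<in> L v" using f(2) c(1) insert.hyps(2) by auto
  ultimately show ?case by blast
qed

text \<open>The choice number deserves its name: lists of that size admit an L-colouring.
  (The least element exists because lists of size |V| always suffice.)\<close>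
lemma L_coloring_from_choice_number:
  fixes L :: "'a \<Rightarrow> nat set"
  assumes fin: "finite V" and irr: "\<forall>v\<in>V. \<not> E v v"
    and lists: "\<forall>v\<in>V. finite (L v) \<and> card (L v) \<ge> choice_number V E"
  shows "\<exists>f. L_coloring V E L f"
proof -
  let ?Q = "\<lambda>m. \<forall>L :: 'a \<Rightarrow> nat set.
      (\<forall>v\<in>V. finite (L v) \<and> card (L v) \<ge> m) \<longrightarrow> (\<exists>f. L_coloring V E L f)"
  have "?Q (card V)"
  proof (intro allI impI)
    fix L :: "'a \<Rightarrow> nat set"
    assume "\<forall>v\<in>V. finite (L v) \<and> card (L v) \<ge> card V"
    from injective_choice_from_lists[OF fin this]
    obtain f where f: "inj_on f V" "\<forall>v\<in>V. f v \<in> L v" by blast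
    have "proper_coloring V E f"
      unfolding proper_coloring_def using f(1) irr by (metis inj_on_contraD)
    then show "\<exists>f. L_coloring V E L f" using f(2) unfolding L_coloring_def by blast
  qed
  then have "?Q (LEAST m. ?Q m)" by (rule LeastI)
  then show ?thesis using lists unfolding choice_number_def by blast
qed

text \<open>The minimality hypothesis in usable form: a graph on nat with fewer than n vertices and a
  proper K-colouring has choice number at most R whenever R \<ge> K and R \<ge> \<lceil>(|V|+K-1)/3\<rceil>
  (both bounds are monotone in the chromatic number, which is at most K).\<close>
lemma choice_number_le_from_minimality:
  fixes V :: "nat set" and g :: "nat \<Rightarrow> nat"
  assumes minimal: "small_graphs_ok n" and sg: "simple_graph V E" and cardV: "card V < n"
    and g: "proper_coloring V E g" and gK: "\<forall>v\<in>V. g v < K"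
    and RK: "K \<le> R" and Rb: "nat \<lceil>(real (card V) + real K - 1) / 3\<rceil> \<le> R"
  shows "choice_number V E \<le> R"
proof -
  have chi: "chromatic_number V E \<le> K" unfolding chromatic_number_def
    by (intro Least_le) (use g gK in auto)
  have "choice_number V E \<le> max (chromatic_number V E)
         (nat \<lceil>(real (card V) + real (chromatic_number V E) - 1) / 3\<rceil>)"
    using minimal sg cardV unfolding small_graphs_ok_def by blast
  also have "\<dots> \<le> R"
  proof -
    have "\<lceil>(real (card V) + real (chromatic_number V E) - 1) / 3\<rceil>
        \<le> \<lceil>(real (card V) + real K - 1) / 3\<rceil>"
      using chi by (intro ceiling_mono) (simp add: divide_right_mono)
    then show ?thesis using Rb RK chi by linarith
  qed
  finally show ?thesis .
qed

text \<open>The same statement for graphs on any vertex type, phrased as choosability with nat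
  colours: the vertices are relabelled injectively into nat.\<close>
lemma small_graph_choosable:
  fixes W :: "'a set" and M :: "'a \<Rightarrow> nat set" and g :: "'a \<Rightarrow> nat"
  assumes minimal: "small_graphs_ok n" and finW: "finite W" and cardW: "card W < n"
    and sym: "\<forall>u\<in>W. \<forall>v\<in>W. E u v \<longrightarrow> E v u" and irr: "\<forall>v\<in>W. \<not> E v v"
    and g: "proper_coloring W E g" and gK: "\<forall>v\<in>W. g v < K"
    and RK: "K \<le> R" and Rb: "nat \<lceil>(real (card W) + real K - 1) / 3\<rceil> \<le> R"
    and lists: "\<forall>w\<in>W. finite (M w) \<and> card (M w) \<ge> R"
  shows "\<exists>f. L_coloring W E M f"
proof -
  obtain h :: "'a \<Rightarrow> nat" where h: "inj_on h W"
    using finite_imp_inj_to_nat_seg[OF finW] by blast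
  define V' where "V' = h ` W"
  define h' where "h' = inv_into W h"
  define E' where "E' = (\<lambda>i j. E (h' i) (h' j))"
  have hh: "\<And>w. w \<in> W \<Longrightarrow> h' (h w) = w" unfolding h'_def using h by simp
  have h'W: "\<And>i. i \<in> V' \<Longrightarrow> h' i \<in> W" unfolding V'_def using hh by auto
  have finV': "finite V'" unfolding V'_def using finW by simp
  have cardV': "card V' = card W" unfolding V'_def using h by (simp add: card_image)
  have sg: "simple_graph V' E'" unfolding simple_graph_def E'_def
    using finV' sym irr h'W by blast
  have "proper_coloring V' E' (g \<circ> h')"
    using g h'W unfolding proper_coloring_def E'_def by auto
  then have "choice_number V' E' \<le> R"
    using choice_number_le_from_minimality[OF minimal sg _ _ _ RK] cardV' cardW gK h'W Rb by auto
  then have "\<forall>i\<in>V'. finite (M (h' i)) \<and> card (M (h' i)) \<ge> choice_number V' E'"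
    using lists h'W by fastforce
  moreover have "\<forall>v\<in>V'. \<not> E' v v" using sg unfolding simple_graph_def by blast
  ultimately obtain f' where f': "L_coloring V' E' (M \<circ> h') f'"
    using L_coloring_from_choice_number[OF finV'] by fastforce
  have "L_coloring W E M (f' \<circ> h)"
    using f' hh unfolding L_coloring_def proper_coloring_def V'_def E'_def
    by (simp add: image_iff)
  then show ?thesis by blast
qed

text \<open>Choosability does not depend on the colour type: a finite list assignment with colours
  of any type is relabelled injectively into nat.\<close>
lemma L_coloring_any_colors:
  fixes M :: "'a \<Rightarrow> 'c set"
  assumes finW: "finite W"
    and choosable: "\<And>M' :: 'a \<Rightarrow> nat set.
       \<forall>w\<in>W. finite (M' w) \<and> card (M' w) \<ge> R \<Longrightarrow> \<exists>f. L_coloring W E M' f"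
    and lists: "\<forall>w\<in>W. finite (M w) \<and> card (M w) \<ge> R"
  shows "\<exists>f. L_coloring W E M f"
proof -
  define U where "U = \<Union>(M ` W)"
  have finU: "finite U" unfolding U_def using finW lists by auto
  obtain c2n :: "'c \<Rightarrow> nat" where c2n: "inj_on c2n U"
    using finite_imp_inj_to_nat_seg[OF finU] by blast
  have MU: "\<And>w. w \<in> W \<Longrightarrow> M w \<subseteq> U" unfolding U_def by auto
  have "\<forall>w\<in>W. finite (c2n ` M w) \<and> card (c2n ` M w) \<ge> R"
  proof
    fix w assume w: "w \<in> W"
    have "card (c2n ` M w) = card (M w)"
      using MU[OF w] by (intro card_image inj_on_subset[OF c2n])
    then show "finite (c2n ` M w) \<and> card (c2n ` M w) \<ge> R" using lists w by simp
  qed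
  from choosable[OF this] obtain f' where f': "L_coloring W E (\<lambda>w. c2n ` M w) f'" by blast
  define f where "f = (\<lambda>w. inv_into U c2n (f' w))"
  have pulled_back: "f w \<in> M w \<and> c2n (f w) = f' w" if w: "w \<in> W" for w
  proof -
    obtain c where c: "c \<in> M w" "f' w = c2n c" using f' w unfolding L_coloring_def by blast
    then have "f w = c" unfolding f_def using c2n MU[OF w] by auto
    then show ?thesis using c by simp
  qed
  have "L_coloring W E M f"
    unfolding L_coloring_def proper_coloring_def
  proof (intro conjI ballI impI)
    fix u v assume "u \<in> W" "v \<in> W" "E u v"
    then show "f u \<noteq> f v" using f' pulled_back unfolding L_coloring_def proper_coloring_def by metis
  qed (use pulled_back in blast)
  then show ?thesis by blast
qed

section \<open>Complete multipartite graphs\<close>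

lemma cmp_adj_same_part: "B \<in> P \<Longrightarrow> u \<in> B \<Longrightarrow> v \<in> B \<Longrightarrow> \<not> cmp_adj P u v"
  unfolding cmp_adj_def by blast

lemma cmp_part_coloring:
  assumes finP: "finite P"
  shows "\<exists>g :: 'a \<Rightarrow> nat. (\<forall>w\<in>\<Union>P. g w < card P) \<and> proper_coloring (\<Union>P) (cmp_adj P) g"
proof -
  obtain idx where idx: "bij_betw idx P {0..<card P}"
    using ex_bij_betw_finite_nat[OF finP] by blast
  define part where "part = (\<lambda>w. SOME B. B \<in> P \<and> w \<in> B)"
  have part: "\<And>w. w \<in> \<Union>P \<Longrightarrow> part w \<in> P \<and> w \<in> part w"
    unfolding part_def by (rule someI_ex) blast
  have "\<forall>w\<in>\<Union>P. (idx \<circ> part) w < card P"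
    using part idx unfolding bij_betw_def by fastforce
  moreover have "proper_coloring (\<Union>P) (cmp_adj P) (idx \<circ> part)"
    unfolding proper_coloring_def
  proof (intro ballI impI notI)
    fix u v assume u: "u \<in> \<Union>P" and v: "v \<in> \<Union>P" and uv: "cmp_adj P u v"
      and "(idx \<circ> part) u = (idx \<circ> part) v"
    then have "part u = part v" using part idx unfolding bij_betw_def inj_on_def by auto
    then show False using cmp_adj_same_part uv part[OF u] part[OF v] by metis
  qed
  ultimately show ?thesis by blast
qed

text \<open>Double counting: if no colour lies in three of the lists L(w), w \<in> B, then the list sizes
  over B sum to at most twice the number of available colours.\<close>
lemma list_sizes_le_twice_colors:
  fixes B :: "'a set" and L :: "'a \<Rightarrow> 'c set" and U :: "'c set"
  assumes finB: "finite B" and finU: "finite U" and sub: "\<forall>w\<in>B. L w \<subseteq> U"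
    and no_triple: "\<And>x1 x2 x3. x1 \<in> B \<Longrightarrow> x2 \<in> B \<Longrightarrow> x3 \<in> B \<Longrightarrow>
        x1 \<noteq> x2 \<Longrightarrow> x1 \<noteq> x3 \<Longrightarrow> x2 \<noteq> x3 \<Longrightarrow> L x1 \<inter> L x2 \<inter> L x3 = {}"
  shows "(\<Sum>w\<in>B. card (L w)) \<le> 2 * card U"
proof -
  have "(\<Sum>w\<in>B. card (L w)) = (\<Sum>w\<in>B. \<Sum>c\<in>U. (of_bool (c \<in> L w) :: nat))"
  proof (rule sum.cong[OF refl])
    fix w assume "w \<in> B"
    then have "U \<inter> {c. c \<in> L w} = L w" using sub by blast
    then show "card (L w) = (\<Sum>c\<in>U. (of_bool (c \<in> L w) :: nat))" using finU by simp
  qed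
  also have "\<dots> = (\<Sum>c\<in>U. \<Sum>w\<in>B. (of_bool (c \<in> L w) :: nat))" by (rule sum.swap)
  also have "\<dots> \<le> (\<Sum>c\<in>U. 2)"
  proof (rule sum_mono)
    fix c
    have count: "(\<Sum>w\<in>B. (of_bool (c \<in> L w) :: nat)) = card {w\<in>B. c \<in> L w}"
      using finB by (simp add: Int_def)
    have "card {w\<in>B. c \<in> L w} \<le> 2"
    proof (rule ccontr)
      assume "\<not> card {w\<in>B. c \<in> L w} \<le> 2"
      then have "3 \<le> card {w\<in>B. c \<in> L w}" by simp
      then obtain T where T: "T \<subseteq> {w\<in>B. c \<in> L w}" "card T = 3"
        by (meson obtain_subset_with_card_n)
      then obtain a b d where "T = {a, b, d}" "a \<noteq> b" "b \<noteq> d" "a \<noteq> d"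
        unfolding card_3_iff by blast
      then show False using T(1) no_triple[of a b d] by blast
    qed
    then show "(\<Sum>w\<in>B. (of_bool (c \<in> L w) :: nat)) \<le> 2" using count by simp
  qed
  finally show ?thesis by simp
qed

locale critical_multipartite =
  fixes P :: "'a set set" and L :: "'a \<Rightarrow> 'c set" and k n :: nat
  assumes k_pos: "k \<ge> 1"
    and n_ge: "n \<ge> 2 * k + 2"
    and part: "is_partition (\<Union>P) P"
    and finV: "finite (\<Union>P)"
    and nV: "card (\<Union>P) = n"
    and kP: "card P = k"
    and fin_lists: "\<forall>w\<in>\<Union>P. finite (L w)"
    and list_size: "\<forall>w\<in>\<Union>P. real (card (L w)) \<ge> \<lceil>(real n + real k - 1) / 3\<rceil>"
    and no_col: "\<not> (\<exists>f. L_coloring (\<Union>P) (cmp_adj P) L f)"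
    and few_colors: "card (\<Union>w\<in>\<Union>P. L w) \<le> n - 1"
    and minimal: "small_graphs_ok n"
begin

definition s :: nat where "s = nat \<lceil>(real n + real k - 1) / 3\<rceil>"

lemma s_ceiling: "int s = \<lceil>(real n + real k - 1) / 3\<rceil>" and three_s: "n + k \<le> 3 * s + 1"
proof -
  define S where "S = \<lceil>(real n + real k - 1) / 3\<rceil>"
  have "(real n + real k - 1) / 3 \<le> real_of_int S" unfolding S_def by (rule le_of_int_ceiling)
  then have "real_of_int (int n + int k - 1) \<le> real_of_int (3 * S)" by simp
  then have S3: "int n + int k - 1 \<le> 3 * S" by (simp only: of_int_le_iff)
  then have "S \<ge> 0" using n_ge by linarith
  then show "int s = \<lceil>(real n + real k - 1) / 3\<rceil>" unfolding s_def S_def[symmetric] by simp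
  with S3 show "n + k \<le> 3 * s + 1" unfolding S_def by linarith
qed

lemma s_gt_k: "k + 1 \<le> s"
  using three_s n_ge by linarith

lemma lists_ge_s: "w \<in> \<Union>P \<Longrightarrow> s \<le> card (L w)"
  using list_size s_ceiling by fastforce

lemma finite_parts: "B \<in> P \<Longrightarrow> finite B"
  using finV by (meson Union_upper finite_subset)

text \<open>Deleting three vertices leaves a graph that minimality makes (s-1)-choosable, for
  lists over any colour type: it has n - 3 vertices, is properly k-coloured by the parts, and
  \<lceil>(n-3+k-1)/3\<rceil> = s - 1 \<ge> k.\<close>
lemma choosable_after_deleting_three:
  fixes M :: "'a \<Rightarrow> 'd set"
  assumes WV: "W \<subseteq> \<Union>P" and cW: "card W + 3 = n"
    and lists: "\<forall>w\<in>W. finite (M w) \<and> s - 1 \<le> card (M w)"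
  shows "\<exists>f. L_coloring W (cmp_adj P) M f"
proof -
  have finW: "finite W" using finV WV by (rule finite_subset[rotated])
  obtain g :: "'a \<Rightarrow> nat" where g: "\<forall>w\<in>\<Union>P. g w < k" "proper_coloring (\<Union>P) (cmp_adj P) g"
    using cmp_part_coloring[OF finite_UnionD[OF finV]] kP by blast
  have gW: "proper_coloring W (cmp_adj P) g" using g(2) WV unfolding proper_coloring_def by blast
  have sym: "\<forall>u\<in>W. \<forall>v\<in>W. cmp_adj P u v \<longrightarrow> cmp_adj P v u" unfolding cmp_adj_def by blast
  have irr: "\<forall>v\<in>W. \<not> cmp_adj P v v" unfolding cmp_adj_def by blast
  have ceil_W: "nat \<lceil>(real (card W) + real k - 1) / 3\<rceil> \<le> s - 1"
  proof -
    have "(real (card W) + real k - 1) / 3 = (real n + real k - 1) / 3 - 1"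
      unfolding cW[symmetric] by (simp add: field_simps)
    then have "\<lceil>(real (card W) + real k - 1) / 3\<rceil> = \<lceil>(real n + real k - 1) / 3 - 1\<rceil>"
      by (rule arg_cong)
    also have "\<dots> = int s - 1" unfolding s_ceiling by (rule ceiling_diff_one)
    finally show ?thesis by simp
  qed
  have cardW: "card W < n" using cW by simp
  have gK: "\<forall>v\<in>W. g v < k" using g(1) WV by blast
  have kR: "k \<le> s - 1" using s_gt_k by simp
  have "\<And>M' :: 'a \<Rightarrow> nat set. \<forall>w\<in>W. finite (M' w) \<and> s - 1 \<le> card (M' w) \<Longrightarrow>
      \<exists>f. L_coloring W (cmp_adj P) M' f"
    by (rule small_graph_choosable[OF minimal finW cardW sym irr gW gK kR ceil_W])
  then show ?thesis by (rule L_coloring_any_colors[OF finW _ lists])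
qed

text \<open>No colour lies in the lists of three vertices of one part: otherwise give these three
  pairwise non-adjacent vertices that colour and list-colour the rest, whose lists keep
  at least s - 1 other colours, by choosable_after_deleting_three.\<close>
lemma no_common_color:
  assumes B: "B \<in> P" and x: "x1 \<in> B" "x2 \<in> B" "x3 \<in> B" "x1 \<noteq> x2" "x1 \<noteq> x3" "x2 \<noteq> x3"
  shows "L x1 \<inter> L x2 \<inter> L x3 = {}"
proof (rule ccontr)
  assume "L x1 \<inter> L x2 \<inter> L x3 \<noteq> {}"
  then obtain c where c: "c \<in> L x1" "c \<in> L x2" "c \<in> L x3" by blast
  define X where "X = {x1, x2, x3}"
  define W where "W = \<Union>P - X"
  have XV: "X \<subseteq> \<Union>P" unfolding X_def using B x by blast
  have "card X = 3" unfolding X_def using x by simp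
  then have cW: "card W + 3 = n"
    using card_Diff_subset[of X] card_mono[OF finV XV] XV nV unfolding W_def by (simp add: X_def)
  have WV: "W \<subseteq> \<Union>P" unfolding W_def by blast
  have lists: "\<forall>w\<in>W. finite (L w - {c}) \<and> s - 1 \<le> card (L w - {c})"
  proof
    fix w assume "w \<in> W"
    then have "w \<in> \<Union>P" unfolding W_def by blast
    then have "finite (L w)" "s \<le> card (L w)" using fin_lists lists_ge_s by auto
    then show "finite (L w - {c}) \<and> s - 1 \<le> card (L w - {c})"
      by (cases "c \<in> L w") (simp_all add: card_Diff_singleton_if)
  qed
  obtain f where "L_coloring W (cmp_adj P) (\<lambda>w. L w - {c}) f"
    using choosable_after_deleting_three[OF WV cW lists] by blast
  then have f: "\<forall>w\<in>W. f w \<in> L w - {c}" "proper_coloring W (cmp_adj P) f"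
    unfolding L_coloring_def by auto
  define F where "F = (\<lambda>w. if w \<in> X then c else f w)"
  have "L_coloring (\<Union>P) (cmp_adj P) L F"
    unfolding L_coloring_def proper_coloring_def
  proof (intro conjI ballI impI)
    fix w assume "w \<in> \<Union>P"
    then show "F w \<in> L w" unfolding F_def using f(1) c unfolding W_def X_def by auto
  next
    fix u v assume u: "u \<in> \<Union>P" and v: "v \<in> \<Union>P" and e: "cmp_adj P u v"
    have "\<not> (u \<in> X \<and> v \<in> X)" using cmp_adj_same_part[OF B] e x unfolding X_def by blast
    then show "F u \<noteq> F v"
      using f u v e unfolding F_def W_def proper_coloring_def by auto
  qed
  with no_col show False by blast
qed


text \<open>By no_common_color, each colour of the palette is counted at most twice in a part.\<close>
lemma part_list_sum: "B \<in> P \<Longrightarrow> (\<Sum>w\<in>B. card (L w)) \<le> 2 * (n - 1)"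
proof -
  assume B: "B \<in> P"
  let ?U = "\<Union>w\<in>\<Union>P. L w"
  have "(\<Sum>w\<in>B. card (L w)) \<le> 2 * card ?U"
  proof (rule list_sizes_le_twice_colors[OF finite_parts[OF B]])
    show "finite ?U" using finV fin_lists by blast
    show "\<forall>w\<in>B. L w \<subseteq> ?U" using B by blast
  qed (use no_common_color[OF B] in blast)
  then show ?thesis using few_colors by linarith
qed

text \<open>A part of size at least 5 would give 5s \<le> 2(n-1), forcing n > 5k and s \<ge> 2k, while summing
  over all k parts gives ns \<le> 2k(n-1) < 2kn \<le> ns.\<close>
lemma part_size_le4: "B \<in> P \<Longrightarrow> card B \<le> 4"
proof (rule ccontr)
  assume B: "B \<in> P" and "\<not> card B \<le> 4"
  have total: "n * s \<le> k * (2 * (n - 1))"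
  proof -
    have disj: "\<forall>A\<in>P. \<forall>B\<in>P. A \<noteq> B \<longrightarrow> A \<inter> B = {}"
      using part unfolding is_partition_def by blast
    have "n * s \<le> (\<Sum>w\<in>\<Union>P. card (L w))"
      using sum_mono[of "\<Union>P" "\<lambda>_. s" "\<lambda>w. card (L w)"] lists_ge_s nV by simp
    also have "\<dots> = (\<Sum>B\<in>P. \<Sum>w\<in>B. card (L w))"
      using sum.Union_disjoint[OF _ disj] finite_parts by simp
    also have "\<dots> \<le> (\<Sum>B\<in>P. 2 * (n - 1))" by (rule sum_mono) (rule part_list_sum)
    finally show ?thesis using kP by simp
  qed
  have "5 * s \<le> (\<Sum>w\<in>B. card (L w))"
  proof -
    have "5 * s \<le> card B * s" using \<open>\<not> card B \<le> 4\<close> by simp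
    also have "\<dots> \<le> (\<Sum>w\<in>B. card (L w))"
      using sum_mono[of B "\<lambda>_. s" "\<lambda>w. card (L w)"] lists_ge_s B by auto
    finally show ?thesis .
  qed
  then have "5 * s \<le> 2 * (n - 1)" using part_list_sum[OF B] by linarith
  then have n5: "n \<ge> 5 * k + 1" using three_s n_ge by linarith
  then have s2k: "s \<ge> 2 * k" using three_s by linarith
  have "k * (2 * n) \<le> n * s" using s2k by (simp add: mult.commute)
  moreover have "k * (2 * (n - 1)) < k * (2 * n)" using k_pos n5 by simp
  ultimately show False using total by linarith
qed

lemma vertex_count: "n \<le> 2 * k + kpart P 3 + 3 * kpart P 4"
proof -
  have finP: "finite P" using finV by (rule finite_UnionD)
  have disj: "pairwise disjnt P"
    using part unfolding is_partition_def pairwise_def disjnt_def by blast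
  have kpart_sum: "kpart P i = (\<Sum>B\<in>P. of_bool (card B = i))" for i
    unfolding kpart_def using finP by (simp add: Collect_conj_eq Int_commute)
  have "n = (\<Sum>B\<in>P. card B)" using card_Union_disjoint[OF disj] finite_parts nV by simp
  also have "\<dots> \<le> (\<Sum>B\<in>P. 2 + of_bool (card B = 3) + 3 * of_bool (card B = 4))"
  proof (rule sum_mono)
    fix B assume "B \<in> P"
    then have "card B \<le> 4" using part_size_le4 by blast
    then show "card B \<le> 2 + of_bool (card B = 3) + 3 * of_bool (card B = 4)"
      by (cases "card B = 3"; cases "card B = 4"; simp)
  qed
  also have "\<dots> = (\<Sum>B\<in>P. 2) + (\<Sum>B\<in>P. of_bool (card B = 3))
      + 3 * (\<Sum>B\<in>P. of_bool (card B = 4))"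
    by (simp only: sum.distrib sum_distrib_left)
  also have "\<dots> = 2 * k + kpart P 3 + 3 * kpart P 4"
    unfolding kpart_sum using kP by simp
  finally show ?thesis .
qed

text \<open>For four distinct vertices u, v, y, z of one part with |L(u) \<inter> L(v)| \<ge> |L(y) \<inter> L(z)|:
  L(u) \<inter> L(v) is disjoint from L(y) \<union> L(z), so the union has at least
  |L(y) \<inter> L(z)| + |L(y) \<union> L(z)| = |L(y)| + |L(z)| \<ge> 2s colours.\<close>
lemma good_pair_union:
  assumes A: "A \<in> P" and in_A: "u \<in> A" "v \<in> A" "y \<in> A" "z \<in> A"
    and distinct: "u \<noteq> v" "y \<noteq> u" "y \<noteq> v" "z \<noteq> u" "z \<noteq> v"
    and good: "card (L u \<inter> L v) \<ge> card (L y \<inter> L z)"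
  shows "2 * s \<le> card ((L u \<inter> L v) \<union> L y \<union> L z)"
proof -
  have V: "u \<in> \<Union>P" "y \<in> \<Union>P" "z \<in> \<Union>P" using A in_A by blast+
  then have fin: "finite (L u)" "finite (L y)" "finite (L z)" using fin_lists by blast+
  have "(L u \<inter> L v) \<inter> (L y \<union> L z) = {}"
    using no_common_color[OF A in_A(1,2,3)] no_common_color[OF A in_A(1,2,4)] distinct by blast
  then have "card ((L u \<inter> L v) \<union> (L y \<union> L z)) = card (L u \<inter> L v) + card (L y \<union> L z)"
    using fin by (intro card_Un_disjoint) auto
  moreover have "card (L y \<union> L z) + card (L y \<inter> L z) = card (L y) + card (L z)"
    using card_Un_Int[OF fin(2,3)] by simp
  moreover have "s \<le> card (L y)" "s \<le> card (L z)" using lists_ge_s V by auto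
  ultimately show ?thesis using good by (simp add: Un_assoc)
qed

end

theorem lemma24:
  fixes P :: "'a set set" and L :: "'a \<Rightarrow> 'c set" and k n :: nat and t :: int
    and A :: "'a set" and u v y z :: 'a
  assumes k1: "k \<ge> 1"
    and n_ge: "n \<ge> 2 * k + 2"
    and part: "is_partition (\<Union>P) P"
    and finV: "finite (\<Union>P)"
    and nV: "card (\<Union>P) = n"
    and kP: "card P = k"
    and fin_lists: "\<forall>w\<in>\<Union>P. finite (L w)"
    and list_size: "\<forall>w\<in>\<Union>P. real (card (L w)) \<ge> \<lceil>(real n + real k - 1) / 3\<rceil>"
    and no_col: "\<not> (\<exists>f. L_coloring (\<Union>P) (cmp_adj P) L f)"
    and few_colors: "card (\<Union>w\<in>\<Union>P. L w) \<le> n - 1"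
    and minimal: "small_graphs_ok n"
    and t_ge: "real_of_int t \<ge> real (kpart P 3) / 3"
    and AP: "A \<in> P" and A4: "card A = 4"
    and uv: "u \<in> A" "v \<in> A" "u \<noteq> v"
    and good: "card (L u \<inter> L v) \<ge> card (L y \<inter> L z)"
    and yz: "{y, z} = A - {u, v}"
  shows "int (card ((L u \<inter> L v) \<union> L y \<union> L z)) \<ge> int n - t - int (kpart P 4)"
proof -
  interpret critical_multipartite P L k n
    by unfold_locales (fact assms)+
  have "y \<in> A - {u, v}" "z \<in> A - {u, v}" using yz by blast+
  moreover have "y \<noteq> z"
  proof
    assume "y = z"
    then have "card (A - {u, v}) = 1" using yz[symmetric] by simp
    moreover have "card (A - {u, v}) = 2"
      using A4 uv finite_parts[OF AP] by (simp add: card_Diff_subset)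
    ultimately show False by simp
  qed
  ultimately have "2 * s \<le> card ((L u \<inter> L v) \<union> L y \<union> L z)"
    using good_pair_union[OF AP uv(1,2) _ _ uv(3) _ _ _ _ good] by blast
  moreover have "3 * t \<ge> int (kpart P 3)" using t_ge by linarith
  \<comment> \<open>3(n - t - k_4) \<le> 3n - k_3 - 3k_4 \<le> 2n + 2k \<le> 6s + 2, using n \<le> 2k + k_3 + 3k_4.\<close>
  ultimately show ?thesis using vertex_count three_s by linarith
qed

end
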